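(* For any $L,L'\in\mathcal{L}$ and any $\gamma$-point, the 1-form $\operatorname{tr}(L\,dL')$ has at most a simple pole at $\gamma$, and $\operatorname{res}_\gamma\operatorname{tr}(L\,dL')=2(\kappa_1+\kappa_2)([L,L'])$.
   Context: $\mathfrak{g}=G_2$ is realized as $7\times7$ matrices $\begin{pmatrix} 0 & -\sqrt{2}a_2^t & -\sqrt{2}a_1^t \\ \sqrt{2}a_1 & A & [a_2] \\ \sqrt{2}a_2 & [a_1] & -A^t \end{pmatrix}$ ($a_i\in\mathbb{C}^3$, $A$ traceless $3\times3$, $[x]$ the skew-symmetric matrix with $[x]y=x\times y$). $\mathcal{L}$ is the Lie algebra (pointwise commutator) of $\mathfrak{g}$-valued meromorphic functions on a Riemann surface with marked points $P_i,Q_j,\gamma_s$, holomorphic outside them, such that at each $\gamma$ (with fixed $\alpha_1,\alpha_2\in\mathbb{C}^3$, $\alpha_1^t\alpha_2=0$, and local coordinate $z$) $L=L_{-2}z^{-2}+L_{-1}z^{-1}+L_0+L_1z+\ldots$ with $L_{-2}=\mu\,\mathrm{diag}(0,\alpha_1\alpha_2^t,-\alpha_2\alpha_1^t)$; $L_{-1}=\begin{pmatrix} 0 & -\sqrt{2}\beta_{02}\alpha_2^t & -\sqrt{2}\beta_{01}\alpha_1^t \\ \sqrt{2}\beta_{01}\alpha_1 & \alpha_1\beta_2^t-\beta_1\alpha_2^t & \beta_{02}[\alpha_2] \\ \sqrt{2}\beta_{02}\alpha_2 & \beta_{01}[\alpha_1] & \alpha_2\beta_1^t-\beta_2\alpha_1^t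 \end{pmatrix}$ with $\alpha_1^t\beta_2=\alpha_2^t\beta_1=0$; $L_0$ with entries $a_1,a_2,A$ satisfying $\alpha_1^ta_2=\alpha_2^ta_1=0$, $A\alpha_1=\kappa_1\alpha_1$, $-A^t\alpha_2=\kappa_2\alpha_2$; and the $(2,2)$ block $B$ of $L_1$ satisfying $\alpha_2^tB\alpha_1=0$. For $L\in\mathcal{L}$, $\kappa_1(L),\kappa_2(L)$ denote these eigenvalues $\kappa_1,\kappa_2$ of $L_0$ at $\gamma$, and $(\kappa_1+\kappa_2)(L)=\kappa_1(L)+\kappa_2(L)$. *)

theory Defs
  imports "HOL-Analysis.Analysis" "HOL-Computational_Algebra.Formal_Laurent_Series"
begin

text \<open>Index set of the 7x7 matrices, split into blocks of sizes 1, 3, 3.\<close>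
type_synonym idx7 = "unit + (3 + 3)"

text \<open>Bilinear (non-Hermitian) pairing x^t y on complex 3-vectors.\<close>
definition dotc :: "complex^3 \<Rightarrow> complex^3 \<Rightarrow> complex" where
  "dotc x y = (\<Sum>i\<in>UNIV. x$i * y$i)"

definition outer :: "complex^3 \<Rightarrow> complex^3 \<Rightarrow> complex^3^3" where
  "outer x y = (\<chi> i j. x$i * y$j)"

text \<open>The skew-symmetric matrix [x] with [x] y = x \<times> y.\<close>
definition crossmat :: "complex^3 \<Rightarrow> complex^3^3" where
  "crossmat x = (\<chi> i j.
     if i = 1 then (if j = 1 then 0 else if j = 2 then - x$3 else x$2)
     else if i = 2 then (if j = 1 then x$3 else if j = 2 then 0 else - x$1)
     else (if j = 1 then - x$2 else if j = 2 then x$1 else 0))"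

text \<open>Block matrix
  ( c   r1^t  r2^t )
  ( c1  M11   M12  )
  ( c2  M21   M22  ).\<close>
definition blk :: "complex \<Rightarrow> complex^3 \<Rightarrow> complex^3 \<Rightarrow>
    complex^3 \<Rightarrow> complex^3^3 \<Rightarrow> complex^3^3 \<Rightarrow>
    complex^3 \<Rightarrow> complex^3^3 \<Rightarrow> complex^3^3 \<Rightarrow> complex^idx7^idx7" where
  "blk c r1 r2 c1 M11 M12 c2 M21 M22 = (\<chi> i j.
     (case i of
        Inl _ \<Rightarrow> (case j of Inl _ \<Rightarrow> c | Inr (Inl q) \<Rightarrow> r1$q | Inr (Inr q) \<Rightarrow> r2$q)
      | Inr (Inl p) \<Rightarrow> (case j of Inl _ \<Rightarrow> c1$p | Inr (Inl q) \<Rightarrow> M11$p$q | Inr (Inr q) \<Rightarrow> M12$p$q)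
      | Inr (Inr p) \<Rightarrow> (case j of Inl _ \<Rightarrow> c2$p | Inr (Inl q) \<Rightarrow> M21$p$q | Inr (Inr q) \<Rightarrow> M22$p$q)))"

definition blk22 :: "complex^idx7^idx7 \<Rightarrow> complex^3^3" where
  "blk22 M = (\<chi> p q. M $ Inr (Inl p) $ Inr (Inl q))"

abbreviation sq2 :: complex where "sq2 \<equiv> complex_of_real (sqrt 2)"

definition g2elt :: "complex^3 \<Rightarrow> complex^3 \<Rightarrow> complex^3^3 \<Rightarrow> complex^idx7^idx7" where
  "g2elt a1 a2 A = blk 0 (- (sq2 *s a2)) (- (sq2 *s a1))
                        (sq2 *s a1) A (crossmat a2)
                        (sq2 *s a2) (crossmat a1) (- transpose A)"

definition g2 :: "(complex^idx7^idx7) set" where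
  "g2 = {g2elt a1 a2 A | a1 a2 A. trace A = 0}"

definition coef :: "complex fls^idx7^idx7 \<Rightarrow> int \<Rightarrow> complex^idx7^idx7" where
  "coef L k = (\<chi> i j. fls_nth (L$i$j) k)"

definition mderiv :: "complex fls^idx7^idx7 \<Rightarrow> complex fls^idx7^idx7" where
  "mderiv L = (\<chi> i j. fls_deriv (L$i$j))"

definition gamma_adm :: "complex^3 \<Rightarrow> complex^3 \<Rightarrow> complex fls^idx7^idx7 \<Rightarrow> bool" where
  "gamma_adm \<alpha>1 \<alpha>2 L \<longleftrightarrow>
     (\<forall>k. coef L k \<in> g2) \<and>
     (\<forall>k < -2. coef L k = 0) \<and>
     (\<exists>\<mu>. coef L (-2) = blk 0 0 0 0 (outer (\<mu> *s \<alpha>1) \<alpha>2) 0 0 0 (- outer (\<mu> *s \<alpha>2) \<alpha>1)) \<and>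
     (\<exists>\<beta>01 \<beta>02 \<beta>1 \<beta>2. dotc \<alpha>1 \<beta>2 = 0 \<and> dotc \<alpha>2 \<beta>1 = 0 \<and>
        coef L (-1) = blk 0 (- ((sq2 * \<beta>02) *s \<alpha>2)) (- ((sq2 * \<beta>01) *s \<alpha>1))
                          ((sq2 * \<beta>01) *s \<alpha>1) (outer \<alpha>1 \<beta>2 - outer \<beta>1 \<alpha>2) (crossmat (\<beta>02 *s \<alpha>2))
                          ((sq2 * \<beta>02) *s \<alpha>2) (crossmat (\<beta>01 *s \<alpha>1)) (outer \<alpha>2 \<beta>1 - outer \<beta>2 \<alpha>1)) \<and>
     (\<exists>a1 a2 A \<kappa>1 \<kappa>2. trace A = 0 \<and> coef L 0 = g2elt a1 a2 A \<and>
        dotc \<alpha>1 a2 = 0 \<and> dotc \<alpha>2 a1 = 0 \<and>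
        A *v \<alpha>1 = \<kappa>1 *s \<alpha>1 \<and> (- transpose A) *v \<alpha>2 = \<kappa>2 *s \<alpha>2) \<and>
     dotc \<alpha>2 (blk22 (coef L 1) *v \<alpha>1) = 0"

definition kappa1 :: "complex^3 \<Rightarrow> complex fls^idx7^idx7 \<Rightarrow> complex" where
  "kappa1 \<alpha>1 L = (THE \<kappa>. blk22 (coef L 0) *v \<alpha>1 = \<kappa> *s \<alpha>1)"

definition kappa2 :: "complex^3 \<Rightarrow> complex fls^idx7^idx7 \<Rightarrow> complex" where
  "kappa2 \<alpha>2 L = (THE \<kappa>. (- transpose (blk22 (coef L 0))) *v \<alpha>2 = \<kappa> *s \<alpha>2)"

end

theory Submission
  imports Defs
begin

text \<open>Write L = sum L_k z^k and L' = sum L'_k z^k, both starting at k = -2. The residue of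
  tr(L dL') is the sum of (-k) tr(L_k L'_{-k}), and the (2,2)-block of [L,L']_0 is the sum of the
  (2,2)-blocks of [L_k, L'_{-k}] for -2 <= k <= 2. Thanks to the explicit shape of L_{-2}, L_{-1},
  L_0 and the condition on L_1, the (2,2)-block A of every single commutator [L_k, L'_{-k}] already
  has \<alpha>1 as an eigenvector of A and \<alpha>2 as one of -A^t, and twice the sum of the two
  eigenvalues is (-k) tr(L_k L'_{-k}); summing over k
  gives the residue formula. The same shapes make tr(L_i L'_j) vanish whenever i + j < 0, which
  kills all Laurent coefficients of tr(L dL') below z^{-1}.\<close>

lemma sum_UNIV_idx7:
  "sum (f :: idx7 \<Rightarrow> 'a::comm_monoid_add) UNIV
     = f (Inl ()) + (\<Sum>q\<in>UNIV. f (Inr (Inl q))) + (\<Sum>q\<in>UNIV. f (Inr (Inr q)))"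
  by (simp flip: UNIV_Plus_UNIV add: sum.Plus UNIV_unit add.assoc o_def)

lemma trace_blk_mult:
  "trace (blk c r1 r2 c1 M11 M12 c2 M21 M22 ** blk d s1 s2 d1 N11 N12 d2 N21 N22)
     = c * d + dotc r1 d1 + dotc r2 d2 + dotc c1 s1 + trace (M11 ** N11) + trace (M12 ** N21)
       + dotc c2 s2 + trace (M21 ** N12) + trace (M22 ** N22)"
  by (simp add: trace_def matrix_matrix_mult_def sum_UNIV_idx7 blk_def dotc_def sum.distrib)

lemma blk22_blk_mult:
  "blk22 (blk c r1 r2 c1 M11 M12 c2 M21 M22 ** blk d s1 s2 d1 N11 N12 d2 N21 N22)
     = outer c1 s1 + M11 ** N11 + M12 ** N21"
  by (simp add: blk22_def matrix_matrix_mult_def sum_UNIV_idx7 blk_def outer_def vec_eq_iff)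

lemma blk22_diff: "blk22 (X - Y) = blk22 X - blk22 Y"
  and blk22_sum: "blk22 (sum F S) = (\<Sum>k\<in>S. blk22 (F k))"
  by (simp_all add: blk22_def vec_eq_iff sum_component)

lemmas components3 = dotc_def outer_def crossmat_def sum_3 vec_eq_iff forall_3
  matrix_matrix_mult_def matrix_vector_mult_def vector_matrix_mult_def transpose_def trace_def

lemma dotc_commute: "dotc x y = dotc y x"
  by (simp add: components3 algebra_simps)

lemma dotc_simps [simp]:
  "dotc (c *s x) y = c * dotc x y" "dotc x (c *s y) = c * dotc x y"
  "dotc (x + y) z = dotc x z + dotc y z" "dotc (x - y) z = dotc x z - dotc y z"
  "dotc z (x + y) = dotc z x + dotc z y" "dotc z (x - y) = dotc z x - dotc z y"
  "dotc (- x) z = - dotc x z" "dotc z (- x) = - dotc z x"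
  "dotc 0 z = 0" "dotc z 0 = 0"
  by (simp_all add: components3 algebra_simps)

lemma dotc_vector_matrix_mult:
  "dotc (y v* B) x = dotc y (B *v x)" "dotc x (y v* B) = dotc y (B *v x)"
  by (simp_all add: components3 algebra_simps)

lemma outer_mult_vector [simp]: "outer x y *v w = dotc y w *s x"
  and transpose_outer [simp]: "transpose (outer x y) = outer y x"
  and transpose_crossmat [simp]: "transpose (crossmat x) = - crossmat x"
  and crossmat_0 [simp]: "crossmat 0 = 0"
  and crossmat_crossmat_mult_vector [simp]:
    "crossmat b *v (crossmat c *v w) = dotc b w *s c - dotc b c *s w"
  and vector_mult_outer [simp]: "w v* outer x y = dotc w x *s y"
  and trace_outer_mult: "trace (outer x y ** B) = dotc y (B *v x)"
  and trace_crossmat_mult: "trace (crossmat b ** crossmat c) = -2 * dotc b c"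
  by (simp_all add: components3 algebra_simps)

lemma transpose_add: "transpose (A + B) = transpose A + transpose (B :: 'a::ring^'n^'m)"
  and transpose_diff: "transpose (A - B) = transpose A - transpose (B :: 'a::ring^'n^'m)"
  and transpose_uminus: "transpose (- A) = - transpose (A :: 'a::ring^'n^'m)"
  by (simp_all add: transpose_def vec_eq_iff)

lemma sq2_mult_self: "sq2 * sq2 = 2"
  by (simp flip: of_real_mult)

lemma blk22_g2elt [simp]: "blk22 (g2elt a1 a2 A) = A"
  by (simp add: blk22_def g2elt_def blk_def vec_eq_iff)

lemma trace_g2elt_mult:
  "trace (g2elt a1 a2 A ** g2elt b1 b2 B) = 2 * trace (A ** B) - 6 * (dotc a1 b2 + dotc a2 b1)"
proof -
  have "dotc (- (sq2 *s x)) (sq2 *s y) = -2 * dotc x y" for x y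
    by (simp add: sq2_mult_self)
  moreover have "trace (- transpose A ** - transpose B) = trace (A ** B)"
    by (simp add: components3 algebra_simps)
  ultimately show ?thesis
    unfolding g2elt_def trace_blk_mult
    by (simp add: trace_crossmat_mult dotc_commute[of b2 a1] dotc_commute[of b1 a2] sq2_mult_self)
qed

lemma blk22_g2elt_mult:
  "blk22 (g2elt a1 a2 A ** g2elt b1 b2 B) = A ** B - outer (2 *s a1) b2 + crossmat a2 ** crossmat b1"
  unfolding g2elt_def blk22_blk_mult by (simp add: outer_def vec_eq_iff sq2_mult_self algebra_simps)

lemma matrix_vector_mult_simps:
  "(A :: complex^3^3) *v (x + y) = A *v x + A *v y" "A *v (x - y) = A *v x - A *v y"
  "A *v (- y) = - (A *v y)" "A *v (c *s x) = c *s (A *v x)"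
  "(A + B) *v w = A *v w + B *v w" "(A - B) *v w = A *v w - B *v w" "(- B) *v w = - (B *v w)"
  "(A ** B) *v w = A *v (B *v w)"
  by (simp_all add: components3 algebra_simps sum_negf)

lemmas g2elt_commutator_simps = blk22_diff blk22_g2elt_mult transpose_add transpose_diff
  transpose_uminus matrix_transpose_mul matrix_vector_mult_simps dotc_vector_matrix_mult

definition has_kappas :: "complex^3 \<Rightarrow> complex^3 \<Rightarrow> complex^3^3 \<Rightarrow> complex \<Rightarrow> complex \<Rightarrow> bool" where
  "has_kappas \<alpha>1 \<alpha>2 A \<kappa>1 \<kappa>2 \<longleftrightarrow> A *v \<alpha>1 = \<kappa>1 *s \<alpha>1 \<and> (- transpose A) *v \<alpha>2 = \<kappa>2 *s \<alpha>2"

lemma has_kappas_iff: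
  "has_kappas \<alpha>1 \<alpha>2 A \<kappa>1 \<kappa>2 \<longleftrightarrow> A *v \<alpha>1 = \<kappa>1 *s \<alpha>1 \<and> \<alpha>2 v* A = (- \<kappa>2) *s \<alpha>2"
proof -
  have "(- transpose A) *v \<alpha>2 = - (\<alpha>2 v* A)"
    by (simp add: matrix_vector_mult_simps)
  moreover have "- v = \<kappa> *s x \<longleftrightarrow> v = (- \<kappa>) *s x" for v x :: "complex^3" and \<kappa>
    by (metis minus_minus vector_smult_lneg)
  ultimately show ?thesis
    unfolding has_kappas_def by simp
qed

lemma has_kappas_add:
  assumes "has_kappas \<alpha>1 \<alpha>2 A \<kappa>1 \<kappa>2" "has_kappas \<alpha>1 \<alpha>2 B \<nu>1 \<nu>2"
  shows "has_kappas \<alpha>1 \<alpha>2 (A + B) (\<kappa>1 + \<nu>1) (\<kappa>2 + \<nu>2)"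
proof -
  have "(A + B) *v \<alpha>1 = A *v \<alpha>1 + B *v \<alpha>1"
    and "(- transpose (A + B)) *v \<alpha>2 = (- transpose A) *v \<alpha>2 + (- transpose B) *v \<alpha>2"
    by (simp_all add: transpose_add matrix_vector_mult_simps del: transpose_matrix_vector)
  with assms show ?thesis
    unfolding has_kappas_def by (simp only: vector_sadd_rdistrib)
qed

lemma has_kappas_uminus:
  assumes "has_kappas \<alpha>1 \<alpha>2 A \<kappa>1 \<kappa>2"
  shows "has_kappas \<alpha>1 \<alpha>2 (- A) (- \<kappa>1) (- \<kappa>2)"
proof -
  have "(- A) *v \<alpha>1 = - (A *v \<alpha>1)"
    and "(- transpose (- A)) *v \<alpha>2 = - ((- transpose A) *v \<alpha>2)"
    by (simp_all add: transpose_uminus matrix_vector_mult_simps del: transpose_matrix_vector)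
  with assms show ?thesis
    unfolding has_kappas_def by (simp only: vector_smult_lneg)
qed

lemma has_kappas_0: "has_kappas \<alpha>1 \<alpha>2 0 0 0"
  by (simp add: has_kappas_def components3)

lemma has_kappas_sum:
  assumes "finite S" "\<And>k. k \<in> S \<Longrightarrow> has_kappas \<alpha>1 \<alpha>2 (A k) (\<kappa>1 k) (\<kappa>2 k)"
  shows "has_kappas \<alpha>1 \<alpha>2 (\<Sum>k\<in>S. A k) (sum \<kappa>1 S) (sum \<kappa>2 S)"
  using assms by (induction S rule: finite_induct) (simp_all add: has_kappas_0 has_kappas_add)

lemma smult_cancel_right:
  assumes "(a::complex) *s x = b *s x" "x \<noteq> 0"
  shows "a = b"
proof -
  obtain i where "x $ i \<noteq> 0" using assms(2) by (auto simp: vec_eq_iff)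
  moreover have "a * x $ i = b * x $ i" by (metis assms(1) vector_smult_component)
  ultimately show ?thesis by simp
qed

lemma kappa1_eqI:
  assumes "has_kappas \<alpha>1 \<alpha>2 (blk22 (coef L 0)) \<kappa>1 \<kappa>2" "\<alpha>1 \<noteq> 0"
  shows "kappa1 \<alpha>1 L = \<kappa>1"
  unfolding kappa1_def
  by (rule the_equality) (use assms in \<open>auto simp: has_kappas_def intro: smult_cancel_right\<close>)

lemma kappa2_eqI:
  assumes "has_kappas \<alpha>1 \<alpha>2 (blk22 (coef L 0)) \<kappa>1 \<kappa>2" "\<alpha>2 \<noteq> 0"
  shows "kappa2 \<alpha>2 L = \<kappa>2"
  unfolding kappa2_def
  by (rule the_equality) (use assms in \<open>auto simp: has_kappas_def intro: smult_cancel_right\<close>)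

text \<open>The shapes of L_{-2} and L_{-1} at \<gamma>; gamma_regular is the shape of L_0, which L_{-2}
  and L_{-1} share.\<close>

definition gamma_pole2 :: "complex^3 \<Rightarrow> complex^3 \<Rightarrow> complex \<Rightarrow> complex^idx7^idx7" where
  "gamma_pole2 \<alpha>1 \<alpha>2 \<mu> = g2elt 0 0 (outer (\<mu> *s \<alpha>1) \<alpha>2)"

definition gamma_pole1 ::
    "complex^3 \<Rightarrow> complex^3 \<Rightarrow> complex \<Rightarrow> complex \<Rightarrow> complex^3 \<Rightarrow> complex^3 \<Rightarrow> complex^idx7^idx7" where
  "gamma_pole1 \<alpha>1 \<alpha>2 \<beta>01 \<beta>02 \<beta>1 \<beta>2
     = g2elt (\<beta>01 *s \<alpha>1) (\<beta>02 *s \<alpha>2) (outer \<alpha>1 \<beta>2 - outer \<beta>1 \<alpha>2)"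

definition gamma_regular :: "complex^3 \<Rightarrow> complex^3 \<Rightarrow> complex^idx7^idx7 \<Rightarrow> bool" where
  "gamma_regular \<alpha>1 \<alpha>2 X \<longleftrightarrow> (\<exists>a1 a2 A \<kappa>1 \<kappa>2. X = g2elt a1 a2 A \<and>
     dotc \<alpha>1 a2 = 0 \<and> dotc \<alpha>2 a1 = 0 \<and> has_kappas \<alpha>1 \<alpha>2 A \<kappa>1 \<kappa>2)"

definition kappa_balanced ::
    "complex^3 \<Rightarrow> complex^3 \<Rightarrow> complex \<Rightarrow> complex^idx7^idx7 \<Rightarrow> complex^idx7^idx7 \<Rightarrow> bool" where
  "kappa_balanced \<alpha>1 \<alpha>2 w X Y \<longleftrightarrow> (\<exists>\<kappa>1 \<kappa>2.
     has_kappas \<alpha>1 \<alpha>2 (blk22 (X ** Y - Y ** X)) \<kappa>1 \<kappa>2 \<and> 2 * (\<kappa>1 + \<kappa>2) = w * trace (X ** Y))"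

lemma trace_pole2_mult:
  "trace (gamma_pole2 \<alpha>1 \<alpha>2 \<mu> ** g2elt c d B) = 2 * \<mu> * dotc \<alpha>2 (B *v \<alpha>1)"
  by (simp add: gamma_pole2_def trace_g2elt_mult trace_outer_mult matrix_vector_mult_simps)

lemma trace_pole1_mult:
  "trace (gamma_pole1 \<alpha>1 \<alpha>2 \<beta>01 \<beta>02 \<beta>1 \<beta>2 ** g2elt c d B)
     = 2 * (dotc \<beta>2 (B *v \<alpha>1) - dotc \<alpha>2 (B *v \<beta>1)) - 6 * (\<beta>01 * dotc d \<alpha>1 + \<beta>02 * dotc \<alpha>2 c)"
  unfolding gamma_pole1_def trace_g2elt_mult by (simp add: components3 algebra_simps)

lemma kappa_balanced_pole2:
  assumes "dotc \<alpha>1 \<alpha>2 = 0"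
  shows "kappa_balanced \<alpha>1 \<alpha>2 2 (gamma_pole2 \<alpha>1 \<alpha>2 \<mu>) (g2elt c d B)"
proof -
  let ?N = "gamma_pole2 \<alpha>1 \<alpha>2 \<mu>" and ?\<kappa> = "\<mu> * dotc \<alpha>2 (B *v \<alpha>1)"
  have "dotc \<alpha>2 \<alpha>1 = 0" using assms dotc_commute by metis
  then have "has_kappas \<alpha>1 \<alpha>2 (blk22 (?N ** g2elt c d B - g2elt c d B ** ?N)) ?\<kappa> ?\<kappa>"
    unfolding has_kappas_def gamma_pole2_def
    by (simp add: g2elt_commutator_simps assms; simp add: components3 algebra_simps)
  then show ?thesis
    unfolding kappa_balanced_def trace_pole2_mult by (intro exI) auto
qed

lemma kappa_balanced_pole1:
  assumes "dotc \<alpha>1 \<alpha>2 = 0" "dotc \<alpha>1 \<beta>2 = 0" "dotc \<alpha>2 \<beta>1 = 0"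
    and "dotc \<alpha>2 (B *v \<alpha>1) = 0"
  shows "kappa_balanced \<alpha>1 \<alpha>2 1 (gamma_pole1 \<alpha>1 \<alpha>2 \<beta>01 \<beta>02 \<beta>1 \<beta>2) (g2elt c d B)"
proof -
  let ?R = "gamma_pole1 \<alpha>1 \<alpha>2 \<beta>01 \<beta>02 \<beta>1 \<beta>2"
  let ?\<kappa>1 = "dotc \<beta>2 (B *v \<alpha>1) - 2 * \<beta>01 * dotc d \<alpha>1 - \<beta>02 * dotc \<alpha>2 c"
  let ?\<kappa>2 = "- dotc \<alpha>2 (B *v \<beta>1) - 2 * \<beta>02 * dotc \<alpha>2 c - \<beta>01 * dotc d \<alpha>1"
  have "dotc \<alpha>2 \<alpha>1 = 0" "dotc \<beta>2 \<alpha>1 = 0" "dotc \<beta>1 \<alpha>2 = 0"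
    using assms dotc_commute by metis+
  then have "has_kappas \<alpha>1 \<alpha>2 (blk22 (?R ** g2elt c d B - g2elt c d B ** ?R)) ?\<kappa>1 ?\<kappa>2"
    unfolding has_kappas_def gamma_pole1_def
    by (simp add: g2elt_commutator_simps assms; simp add: components3 algebra_simps)
  then show ?thesis
    unfolding kappa_balanced_def trace_pole1_mult by (intro exI) (auto simp: algebra_simps)
qed

lemma kappa_balanced_regular:
  assumes "gamma_regular \<alpha>1 \<alpha>2 X" "gamma_regular \<alpha>1 \<alpha>2 Y"
  shows "kappa_balanced \<alpha>1 \<alpha>2 0 X Y"
proof -
  obtain a1 a2 A \<kappa>1 \<kappa>2 where X: "X = g2elt a1 a2 A" "dotc \<alpha>1 a2 = 0" "dotc \<alpha>2 a1 = 0"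
      "has_kappas \<alpha>1 \<alpha>2 A \<kappa>1 \<kappa>2"
    using assms(1) by (auto simp: gamma_regular_def)
  obtain b1 b2 B \<nu>1 \<nu>2 where Y: "Y = g2elt b1 b2 B" "dotc \<alpha>1 b2 = 0" "dotc \<alpha>2 b1 = 0"
      "has_kappas \<alpha>1 \<alpha>2 B \<nu>1 \<nu>2"
    using assms(2) by (auto simp: gamma_regular_def)
  have "dotc a2 \<alpha>1 = 0" "dotc a1 \<alpha>2 = 0" "dotc b2 \<alpha>1 = 0" "dotc b1 \<alpha>2 = 0"
    using X Y dotc_commute by metis+
  moreover have "A *v \<alpha>1 = \<kappa>1 *s \<alpha>1" "\<alpha>2 v* A = (- \<kappa>2) *s \<alpha>2"
    and "B *v \<alpha>1 = \<nu>1 *s \<alpha>1" "\<alpha>2 v* B = (- \<nu>2) *s \<alpha>2"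
    using X(4) Y(4) unfolding has_kappas_iff by auto
  ultimately have "has_kappas \<alpha>1 \<alpha>2 (blk22 (X ** Y - Y ** X))
      (dotc b2 a1 - dotc a2 b1) (dotc a2 b1 - dotc b2 a1)"
    unfolding has_kappas_def X(1) Y(1)
    by (simp add: g2elt_commutator_simps; simp add: components3 algebra_simps)
  then show ?thesis
    unfolding kappa_balanced_def by (intro exI) auto
qed

lemma kappa_balanced_swap:
  assumes "kappa_balanced \<alpha>1 \<alpha>2 w Y X"
  shows "kappa_balanced \<alpha>1 \<alpha>2 (- w) X Y"
proof -
  obtain \<kappa>1 \<kappa>2 where \<kappa>: "has_kappas \<alpha>1 \<alpha>2 (blk22 (Y ** X - X ** Y)) \<kappa>1 \<kappa>2"
      and tr: "2 * (\<kappa>1 + \<kappa>2) = w * trace (Y ** X)"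
    using assms unfolding kappa_balanced_def by blast
  have "blk22 (X ** Y - Y ** X) = - blk22 (Y ** X - X ** Y)"
    by (simp add: blk22_def vec_eq_iff)
  then have "has_kappas \<alpha>1 \<alpha>2 (blk22 (X ** Y - Y ** X)) (- \<kappa>1) (- \<kappa>2)"
    using has_kappas_uminus[OF \<kappa>] by simp
  moreover have "2 * (- \<kappa>1 + - \<kappa>2) = - w * trace (X ** Y)"
    using tr trace_mul_sym[of X Y] by (metis minus_add_distrib mult_minus_left mult_minus_right)
  ultimately show ?thesis
    unfolding kappa_balanced_def by blast
qed

lemma gamma_regular_0: "gamma_regular \<alpha>1 \<alpha>2 0"
proof -
  have "(0 :: complex^idx7^idx7) = g2elt 0 0 0"
    by (simp add: g2elt_def blk_def vec_eq_iff transpose_def split: sum.split)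
  then show ?thesis
    unfolding gamma_regular_def using has_kappas_0 by fastforce
qed

lemma gamma_regular_pole2:
  assumes "dotc \<alpha>1 \<alpha>2 = 0"
  shows "gamma_regular \<alpha>1 \<alpha>2 (gamma_pole2 \<alpha>1 \<alpha>2 \<mu>)"
proof -
  have "dotc \<alpha>2 \<alpha>1 = 0" using assms dotc_commute by metis
  then have "has_kappas \<alpha>1 \<alpha>2 (outer (\<mu> *s \<alpha>1) \<alpha>2) 0 0"
    using assms by (simp add: has_kappas_iff)
  then show ?thesis
    unfolding gamma_regular_def gamma_pole2_def by fastforce
qed

lemma gamma_regular_pole1:
  assumes "dotc \<alpha>1 \<alpha>2 = 0" "dotc \<alpha>1 \<beta>2 = 0" "dotc \<alpha>2 \<beta>1 = 0"
  shows "gamma_regular \<alpha>1 \<alpha>2 (gamma_pole1 \<alpha>1 \<alpha>2 \<beta>01 \<beta>02 \<beta>1 \<beta>2)"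
proof -
  have "dotc \<alpha>2 \<alpha>1 = 0" "dotc \<beta>2 \<alpha>1 = 0" using assms dotc_commute by metis+
  then have "has_kappas \<alpha>1 \<alpha>2 (outer \<alpha>1 \<beta>2 - outer \<beta>1 \<alpha>2) 0 0"
    using assms by (simp add: has_kappas_iff matrix_vector_mult_simps vector_matrix_mult_diff_rdistrib)
  moreover have "dotc \<alpha>1 (\<beta>02 *s \<alpha>2) = 0" "dotc \<alpha>2 (\<beta>01 *s \<alpha>1) = 0"
    using assms(1) \<open>dotc \<alpha>2 \<alpha>1 = 0\<close> by simp_all
  ultimately show ?thesis
    unfolding gamma_regular_def gamma_pole1_def by blast
qed

lemma gamma_regular_isotropic:
  assumes "gamma_regular \<alpha>1 \<alpha>2 X" "dotc \<alpha>1 \<alpha>2 = 0"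
  shows "dotc \<alpha>2 (blk22 X *v \<alpha>1) = 0"
proof -
  obtain a1 a2 A \<kappa>1 \<kappa>2 where "X = g2elt a1 a2 A" "has_kappas \<alpha>1 \<alpha>2 A \<kappa>1 \<kappa>2"
    using assms(1) unfolding gamma_regular_def by blast
  then show ?thesis
    using assms(2) dotc_commute[of \<alpha>1 \<alpha>2] by (simp add: has_kappas_def)
qed

lemma trace_pole1_regular:
  assumes "dotc \<alpha>1 \<alpha>2 = 0" "dotc \<alpha>1 \<beta>2 = 0" "dotc \<alpha>2 \<beta>1 = 0"
    and "gamma_regular \<alpha>1 \<alpha>2 X"
  shows "trace (gamma_pole1 \<alpha>1 \<alpha>2 \<beta>01 \<beta>02 \<beta>1 \<beta>2 ** X) = 0"
proof -
  obtain c d B \<kappa>1 \<kappa>2 where X: "X = g2elt c d B" "dotc \<alpha>1 d = 0" "dotc \<alpha>2 c = 0"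
      "B *v \<alpha>1 = \<kappa>1 *s \<alpha>1" "\<alpha>2 v* B = (- \<kappa>2) *s \<alpha>2"
    using assms(4) unfolding gamma_regular_def has_kappas_iff by blast
  have "dotc \<beta>2 \<alpha>1 = 0" "dotc d \<alpha>1 = 0"
    using assms X dotc_commute by metis+
  moreover have "dotc \<alpha>2 (B *v \<beta>1) = 0"
    using X(5) assms(3) by (metis dotc_vector_matrix_mult(1) dotc_simps(1) mult_zero_right)
  ultimately show ?thesis
    using X assms by (simp add: trace_pole1_mult)
qed

unbundle fps_syntax

lemma fls_times_nth_window:
  fixes f g :: "'a::comm_ring_1 fls"
  assumes "\<forall>k < a. f $$ k = 0" and "\<forall>k < b. g $$ k = 0"
  shows "(f * g) $$ n = (\<Sum>i=a..n-b. f $$ i * g $$ (n - i))"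
proof (cases "f = 0 \<or> g = 0")
  case False
  then have "a \<le> fls_subdegree f" "b \<le> fls_subdegree g"
    using assms fls_subdegree_geI by blast+
  then have "{fls_subdegree f..n - fls_subdegree g} \<subseteq> {a..n - b}" by auto
  moreover have "f $$ i * g $$ (n - i) = 0" if "i \<notin> {fls_subdegree f..n - fls_subdegree g}" for i
  proof -
    from that have "i < fls_subdegree f \<or> n - i < fls_subdegree g" by auto
    then show ?thesis by auto
  qed
  ultimately have "(\<Sum>i=fls_subdegree f..n - fls_subdegree g. f $$ i * g $$ (n - i))
      = (\<Sum>i=a..n-b. f $$ i * g $$ (n - i))"
    by (intro sum.mono_neutral_left) auto
  then show ?thesis by (simp add: fls_times_nth(2))
qed auto

lemma coef_mult:
  assumes "\<forall>k < a. coef L k = 0" and "\<forall>k < b. coef M k = 0"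
  shows "coef (L ** M) n = (\<Sum>k=a..n-b. coef L k ** coef M (n - k))"
proof -
  have "\<forall>k < a. L $ i $ j $$ k = 0" "\<forall>k < b. M $ i $ j $$ k = 0" for i j
    using assms by (auto simp: coef_def vec_eq_iff)
  then show ?thesis
    by (simp add: vec_eq_iff coef_def matrix_matrix_mult_def fls_nth_sum sum_component
        fls_times_nth_window[where a = a and b = b] sum.swap[where B = "{a..n - b}"])
qed

lemma coef_diff: "coef (L - M) n = coef L n - coef M n"
  by (simp add: coef_def vec_eq_iff)

lemma coef_mderiv: "coef (mderiv M) n = (\<chi> i j. of_int (n + 1) * coef M (n + 1) $ i $ j)"
  by (simp add: coef_def mderiv_def vec_eq_iff)

lemma fls_nth_trace: "trace M $$ n = trace (coef M n)"
  by (simp add: trace_def coef_def fls_nth_sum)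

lemma trace_sum: "trace (sum F S) = (\<Sum>k\<in>S. trace (F k :: complex^'n^'n))"
  by (simp add: trace_def sum_component sum.swap[where A = S])

lemma trace_mult_scale: "trace (X ** (\<chi> i j. c * Y $ i $ j)) = c * trace (X ** (Y :: complex^'n^'n))"
  by (simp add: trace_def matrix_matrix_mult_def sum_distrib_left algebra_simps)

lemma trace_mult_mderiv_nth:
  assumes "\<forall>k < -2. coef L k = 0" and "\<forall>k < -2. coef M k = 0"
  shows "trace (L ** mderiv M) $$ n
    = (\<Sum>k=-2..n+3. of_int (n - k + 1) * trace (coef L k ** coef M (n - k + 1)))"
proof -
  have "coef (mderiv M) k = 0" if "k < -3" for k
    using assms(2) that by (simp add: coef_mderiv vec_eq_iff)
  then have "coef (L ** mderiv M) n = (\<Sum>k=-2..n - -3. coef L k ** coef (mderiv M) (n - k))"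
    using coef_mult assms(1) by blast
  then show ?thesis
    unfolding fls_nth_trace by (simp add: trace_sum coef_mderiv trace_mult_scale)
qed

lemma fls_residue_trace_mult_mderiv:
  assumes "\<forall>k < -2. coef L k = 0" and "\<forall>k < -2. coef M k = 0"
  shows "fls_residue (trace (L ** mderiv M))
    = (\<Sum>k=-2..2. of_int (- k) * trace (coef L k ** coef M (- k)))"
  by (simp add: fls_residue_def trace_mult_mderiv_nth[OF assms])

lemma coef_commutator_0:
  assumes "\<forall>k < -2. coef L k = 0" and "\<forall>k < -2. coef M k = 0"
  shows "coef (L ** M - M ** L) 0 = (\<Sum>k=-2..2. coef L k ** coef M (- k) - coef M (- k) ** coef L k)"
proof -
  have "(\<Sum>k=-2..2. coef M k ** coef L (0 - k)) = (\<Sum>k=-2..2. coef M (- k) ** coef L k)"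
    by (rule sum.reindex_bij_witness[of _ uminus uminus]) auto
  then show ?thesis
    by (simp add: coef_diff coef_mult[OF assms(1,2)] coef_mult[OF assms(2,1)] sum_subtractf)
qed

lemma
  assumes "gamma_adm \<alpha>1 \<alpha>2 L"
  shows gamma_adm_coef_g2: "coef L k \<in> g2"
    and gamma_adm_coef_below: "\<forall>k < -2. coef L k = 0"
    and gamma_adm_coef_pole2: "\<exists>\<mu>. coef L (-2) = gamma_pole2 \<alpha>1 \<alpha>2 \<mu>"
    and gamma_adm_coef_pole1: "\<exists>\<beta>01 \<beta>02 \<beta>1 \<beta>2. dotc \<alpha>1 \<beta>2 = 0 \<and> dotc \<alpha>2 \<beta>1 = 0 \<and>
           coef L (-1) = gamma_pole1 \<alpha>1 \<alpha>2 \<beta>01 \<beta>02 \<beta>1 \<beta>2"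
    and gamma_adm_coef_0: "gamma_regular \<alpha>1 \<alpha>2 (coef L 0)"
    and gamma_adm_coef_1: "dotc \<alpha>2 (blk22 (coef L 1) *v \<alpha>1) = 0"
proof -
  note adm = assms[unfolded gamma_adm_def]
  show "coef L k \<in> g2" "\<forall>k < -2. coef L k = 0" "dotc \<alpha>2 (blk22 (coef L 1) *v \<alpha>1) = 0"
    using adm by blast+
  show "gamma_regular \<alpha>1 \<alpha>2 (coef L 0)"
    using adm unfolding gamma_regular_def has_kappas_def by auto
  have "- transpose (outer (\<mu> *s \<alpha>1) \<alpha>2) = - outer (\<mu> *s \<alpha>2) \<alpha>1" for \<mu>
    by (simp add: components3)
  then show "\<exists>\<mu>. coef L (-2) = gamma_pole2 \<alpha>1 \<alpha>2 \<mu>"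
    using adm by (auto simp: gamma_pole2_def g2elt_def)
  have "- transpose (outer \<alpha>1 \<beta>2 - outer \<beta>1 \<alpha>2) = outer \<alpha>2 \<beta>1 - outer \<beta>2 \<alpha>1" for \<beta>1 \<beta>2
    by (simp add: components3)
  then show "\<exists>\<beta>01 \<beta>02 \<beta>1 \<beta>2. dotc \<alpha>1 \<beta>2 = 0 \<and> dotc \<alpha>2 \<beta>1 = 0 \<and>
      coef L (-1) = gamma_pole1 \<alpha>1 \<alpha>2 \<beta>01 \<beta>02 \<beta>1 \<beta>2"
    using adm by (auto simp: gamma_pole1_def g2elt_def vector_smult_assoc)
qed

lemma gamma_adm_coef_regular:
  assumes "dotc \<alpha>1 \<alpha>2 = 0" "gamma_adm \<alpha>1 \<alpha>2 L" "k \<le> 0"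
  shows "gamma_regular \<alpha>1 \<alpha>2 (coef L k)"
proof -
  consider "k < -2" | "k = -2" | "k = -1" | "k = 0" using assms(3) by linarith
  then show ?thesis
  proof cases
    case 1
    then show ?thesis using gamma_adm_coef_below[OF assms(2)] gamma_regular_0 by simp
  next
    case 2
    then show ?thesis using gamma_adm_coef_pole2[OF assms(2)] gamma_regular_pole2[OF assms(1)] by auto
  next
    case 3
    then show ?thesis using gamma_adm_coef_pole1[OF assms(2)] gamma_regular_pole1[OF assms(1)] by auto
  next
    case 4
    then show ?thesis using gamma_adm_coef_0[OF assms(2)] by simp
  qed
qed

lemma gamma_adm_coef_isotropic:
  assumes "dotc \<alpha>1 \<alpha>2 = 0" "gamma_adm \<alpha>1 \<alpha>2 L" "k \<le> 1"
  shows "dotc \<alpha>2 (blk22 (coef L k) *v \<alpha>1) = 0"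
proof (cases "k = 1")
  case False
  then show ?thesis
    using assms gamma_adm_coef_regular gamma_regular_isotropic by simp
qed (use gamma_adm_coef_1[OF assms(2)] in simp)

lemma gamma_adm_trace_coef_mult:
  assumes "dotc \<alpha>1 \<alpha>2 = 0" "gamma_adm \<alpha>1 \<alpha>2 L" "gamma_adm \<alpha>1 \<alpha>2 L'" "i + j < 0"
  shows "trace (coef L i ** coef L' j) = 0"
proof -
  have ordered: "trace (coef L i ** coef L' j) = 0"
    if L: "gamma_adm \<alpha>1 \<alpha>2 L" and L': "gamma_adm \<alpha>1 \<alpha>2 L'"
      and "i \<le> j" "i + j < 0" for L L' i j
  proof -
    consider "i < -2" | "i = -2" | "i = -1" using \<open>i \<le> j\<close> \<open>i + j < 0\<close> by linarith
    then show ?thesis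
    proof cases
      case 1
      then show ?thesis using gamma_adm_coef_below[OF L] by (simp add: trace_def)
    next
      case 2
      obtain c d B where "coef L' j = g2elt c d B"
        using gamma_adm_coef_g2[OF L'] unfolding g2_def by blast
      moreover have "dotc \<alpha>2 (blk22 (coef L' j) *v \<alpha>1) = 0"
        using gamma_adm_coef_isotropic[OF assms(1) L'] 2 \<open>i + j < 0\<close> by simp
      ultimately show ?thesis
        using gamma_adm_coef_pole2[OF L] 2 trace_pole2_mult by auto
    next
      case 3
      then have "gamma_regular \<alpha>1 \<alpha>2 (coef L' j)"
        using gamma_adm_coef_regular[OF assms(1) L'] \<open>i + j < 0\<close> by simp
      then show ?thesis
        using gamma_adm_coef_pole1[OF L] 3 trace_pole1_regular[OF assms(1)] by auto
    qed
  qed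
  show ?thesis
  proof (cases "i \<le> j")
    case False
    then show ?thesis
      using ordered[of L' L j i] assms trace_mul_sym[of "coef L i"] by simp
  qed (use ordered assms in simp)
qed

lemma gamma_adm_kappa_balanced:
  assumes "dotc \<alpha>1 \<alpha>2 = 0" "gamma_adm \<alpha>1 \<alpha>2 L" "gamma_adm \<alpha>1 \<alpha>2 L'" "k \<in> {-2..2}"
  shows "kappa_balanced \<alpha>1 \<alpha>2 (of_int (- k)) (coef L k) (coef L' (- k))"
proof -
  have nonpos: "kappa_balanced \<alpha>1 \<alpha>2 (of_int (- k)) (coef L k) (coef L' (- k))"
    if L: "gamma_adm \<alpha>1 \<alpha>2 L" and L': "gamma_adm \<alpha>1 \<alpha>2 L'"
      and "k \<in> {-2..0}" for L L' k
  proof -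
    consider "k = -2" | "k = -1" | "k = 0" using \<open>k \<in> {-2..0}\<close> by force
    then show ?thesis
    proof cases
      case 1
      obtain c d B where "coef L' 2 = g2elt c d B"
        using gamma_adm_coef_g2[OF L'] unfolding g2_def by blast
      then show ?thesis
        using gamma_adm_coef_pole2[OF L] kappa_balanced_pole2[OF assms(1)] 1 by auto
    next
      case 2
      obtain c d B where "coef L' 1 = g2elt c d B"
        using gamma_adm_coef_g2[OF L'] unfolding g2_def by blast
      moreover have "dotc \<alpha>2 (B *v \<alpha>1) = 0"
        using gamma_adm_coef_1[OF L'] calculation by simp
      ultimately show ?thesis
        using gamma_adm_coef_pole1[OF L] kappa_balanced_pole1[OF assms(1)] 2 by auto
    next
      case 3
      then show ?thesis
        using kappa_balanced_regular gamma_adm_coef_0 L L' by simp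
    qed
  qed
  show ?thesis
  proof (cases "k \<le> 0")
    case False
    then have "kappa_balanced \<alpha>1 \<alpha>2 (of_int k) (coef L' (- k)) (coef L k)"
      using nonpos[of L' L "- k"] assms by simp
    then show ?thesis
      using kappa_balanced_swap by fastforce
  qed (use nonpos assms in simp)
qed

lemma gamma_adm_trace_mult_mderiv_subdegree:
  assumes "dotc \<alpha>1 \<alpha>2 = 0" "gamma_adm \<alpha>1 \<alpha>2 L" "gamma_adm \<alpha>1 \<alpha>2 L'"
  shows "fls_subdegree (trace (L ** mderiv L')) \<ge> -1"
proof (cases "trace (L ** mderiv L') = 0")
  case False
  have "trace (L ** mderiv L') $$ n = 0" if "n < -1" for n
    unfolding trace_mult_mderiv_nth[OF gamma_adm_coef_below[OF assms(2)] gamma_adm_coef_below[OF assms(3)]]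
    using gamma_adm_trace_coef_mult[OF assms] that by simp
  then show ?thesis
    using fls_subdegree_geI[OF False] by blast
qed simp

theorem lemma5p2:
  fixes \<alpha>1 \<alpha>2 :: "complex^3" and L L' :: "complex fls^idx7^idx7"
  assumes "\<alpha>1 \<noteq> 0" and "\<alpha>2 \<noteq> 0" and "dotc \<alpha>1 \<alpha>2 = 0"
    and "gamma_adm \<alpha>1 \<alpha>2 L" and "gamma_adm \<alpha>1 \<alpha>2 L'"
  shows "fls_subdegree (trace (L ** mderiv L')) \<ge> -1 \<and>
         fls_residue (trace (L ** mderiv L')) =
           2 * (kappa1 \<alpha>1 (L ** L' - L' ** L) + kappa2 \<alpha>2 (L ** L' - L' ** L))"
proof -
  note below = gamma_adm_coef_below[OF assms(4)] gamma_adm_coef_below[OF assms(5)]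
  let ?comm = "\<lambda>k. coef L k ** coef L' (- k) - coef L' (- k) ** coef L k"
  obtain \<kappa>1 \<kappa>2 where \<kappa>: "\<And>k. k \<in> {-2..2} \<Longrightarrow> has_kappas \<alpha>1 \<alpha>2 (blk22 (?comm k)) (\<kappa>1 k) (\<kappa>2 k)"
    and tr: "\<And>k. k \<in> {-2..2} \<Longrightarrow> 2 * (\<kappa>1 k + \<kappa>2 k) = of_int (- k) * trace (coef L k ** coef L' (- k))"
    using gamma_adm_kappa_balanced[OF assms(3-5)] unfolding kappa_balanced_def by metis
  have "has_kappas \<alpha>1 \<alpha>2 (blk22 (coef (L ** L' - L' ** L) 0)) (sum \<kappa>1 {-2..2}) (sum \<kappa>2 {-2..2})"
    unfolding coef_commutator_0[OF below] blk22_sum by (rule has_kappas_sum) (simp_all add: \<kappa>)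
  then have "kappa1 \<alpha>1 (L ** L' - L' ** L) = sum \<kappa>1 {-2..2}" "kappa2 \<alpha>2 (L ** L' - L' ** L) = sum \<kappa>2 {-2..2}"
    using kappa1_eqI kappa2_eqI assms(1,2) by blast+
  moreover have "fls_residue (trace (L ** mderiv L')) = (\<Sum>k=-2..2. 2 * (\<kappa>1 k + \<kappa>2 k))"
    unfolding fls_residue_trace_mult_mderiv[OF below] using tr by simp
  ultimately show ?thesis
    using gamma_adm_trace_mult_mderiv_subdegree[OF assms(3-5)]
    by (simp add: sum.distrib sum_distrib_left)
qed

end
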